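(* Let $F:\mathbb{R}^p\to\mathbb{R}^p$ be single-valued and $L$-Lipschitz continuous and $T:\mathbb{R}^p\rightrightarrows\mathbb{R}^p$ be maximally $3$-cyclically monotone, $\Phi:=F+T$, with $\mathrm{zer}\,\Phi\neq\emptyset$. Let $\tau>1$, $\eta>0$, and let $\{(x^k,y^k)\}$ be generated by the golden-ratio scheme: start from $x^0\in\mathrm{dom}\,\Phi$, set $y^{-1}:=x^0$, and for $k\ge0$ $$y^k:=\tfrac{\tau-1}{\tau}x^k+\tfrac1\tau y^{k-1},\qquad x^{k+1}:=J_{\eta T}(y^k-\eta Fx^k).$$ Then for any $x^\star\in\mathrm{zer}\,\Phi$, any $\gamma>0$ and every $k\ge1$, $$\begin{aligned}&\tau\|y^{k+1}-x^\star\|^2+(\tau-1)(\tau-\gamma)\|x^{k+1}-x^k\|^2\le\tau\|y^k-x^\star\|^2+\tfrac{(\tau-1)L^2\eta^2}{\gamma}\|x^k-x^{k-1}\|^2\\&\quad-\tfrac{(\tau-1)(1-\tau^2+\tau)}{\tau}\|x^{k+1}-y^k\|^2-\tau(\tau-1)\|x^k-y^k\|^2-2\eta(\tau-1)\langle Fx^k-Fx^\star,x^k-x^\star\rangle.\end{aligned}$$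
   Context: $J_{\eta T}:=(\mathbb{I}+\eta T)^{-1}$ is the resolvent of $\eta T$; $\mathrm{zer}\,\Phi:=\{x:0\in Fx+Tx\}$. $T$ is $3$-cyclically monotone if $\sum_{i=1}^3\langle u^i,x^i-x^{i+1}\rangle\ge0$ for all $(x^i,u^i)\in\mathrm{gra}\,T$ with $x^4=x^1$; maximally so if its graph is not properly contained in that of another $3$-cyclically monotone operator. $F$ is $L$-Lipschitz if $\|Fx-Fy\|\le L\|x-y\|$. The range $k\ge1$ is where $x^{k-1}$ is defined by the scheme. *)

theory Defs
  imports "HOL-Analysis.Analysis"
begin

definition gra :: "('a \<Rightarrow> 'b set) \<Rightarrow> ('a \<times> 'b) set" where
  "gra T = {(x, u). u \<in> T x}"

definition dom_op :: "('a \<Rightarrow> 'b set) \<Rightarrow> 'a set" where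
  "dom_op T = {x. T x \<noteq> {}}"

definition cyc3_mono_graph :: "('a::real_inner \<times> 'a) set \<Rightarrow> bool" where
  "cyc3_mono_graph G \<longleftrightarrow>
     (\<forall>x1 u1 x2 u2 x3 u3. (x1, u1) \<in> G \<longrightarrow> (x2, u2) \<in> G \<longrightarrow> (x3, u3) \<in> G \<longrightarrow>
        inner u1 (x1 - x2) + inner u2 (x2 - x3) + inner u3 (x3 - x1) \<ge> 0)"

definition cyc3_monotone :: "('a::real_inner \<Rightarrow> 'a set) \<Rightarrow> bool" where
  "cyc3_monotone T \<longleftrightarrow> cyc3_mono_graph (gra T)"

definition max_cyc3_monotone :: "('a::real_inner \<Rightarrow> 'a set) \<Rightarrow> bool" where
  "max_cyc3_monotone T \<longleftrightarrow> cyc3_monotone T \<and>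
     (\<forall>S. cyc3_monotone S \<and> gra T \<subseteq> gra S \<longrightarrow> gra S = gra T)"

text \<open>Resolvent J_{eta T} = (I + eta T)^{-1}, as a set-valued map:
  x \<in> J v  iff  v \<in> x + eta T x.\<close>
definition resolvent :: "real \<Rightarrow> ('a::real_vector \<Rightarrow> 'a set) \<Rightarrow> 'a \<Rightarrow> 'a set" where
  "resolvent \<eta> T v = {x. \<exists>u \<in> T x. v = x + \<eta> *\<^sub>R u}"

definition zer_sum :: "('a \<Rightarrow> 'a::real_vector) \<Rightarrow> ('a \<Rightarrow> 'a set) \<Rightarrow> 'a set" where
  "zer_sum F T = {x. \<exists>u \<in> T x. F x + u = 0}"

end

theory Submission
  imports Defs
begin

text \<open>The resolvent steps and the zero condition provide elements of \<open>T\<close> at \<open>x\<^sup>k\<^sup>+\<^sup>1\<close>, \<open>x\<^sup>k\<close>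
  and \<open>x\<^sup>\<star>\<close>, namely \<open>(y\<^sup>k - x\<^sup>k\<^sup>+\<^sup>1)/\<eta> - F x\<^sup>k\<close>, \<open>(y\<^sup>k\<^sup>-\<^sup>1 - x\<^sup>k)/\<eta> - F x\<^sup>k\<^sup>-\<^sup>1\<close> and \<open>-F x\<^sup>\<star>\<close>.
  3-cyclic monotonicity along the cycle \<open>x\<^sup>k\<^sup>+\<^sup>1 \<rightarrow> x\<^sup>\<star> \<rightarrow> x\<^sup>k\<close> couples all three and bounds
  \<open>\<langle>y\<^sup>k - x\<^sup>k\<^sup>+\<^sup>1, x\<^sup>k\<^sup>+\<^sup>1 - x\<^sup>\<star>\<rangle> + \<langle>y\<^sup>k\<^sup>-\<^sup>1 - x\<^sup>k, x\<^sup>k - x\<^sup>k\<^sup>+\<^sup>1\<rangle>\<close> from below by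
  \<open>\<eta>\<langle>F x\<^sup>k - F x\<^sup>\<star>, x\<^sup>k - x\<^sup>\<star>\<rangle> + \<eta>\<langle>F x\<^sup>k - F x\<^sup>k\<^sup>-\<^sup>1, x\<^sup>k\<^sup>+\<^sup>1 - x\<^sup>k\<rangle>\<close>. Because \<open>y\<^sup>k\<^sup>+\<^sup>1\<close> and
  \<open>y\<^sup>k\<close> are convex combinations with weight \<open>1/\<tau>\<close> on the previous \<open>y\<close>, \<open>2(\<tau> - 1)\<close> times the
  left-hand side equals, by an exact identity, the decrease of \<open>\<tau>\<parallel>y - x\<^sup>\<star>\<parallel>\<^sup>2\<close> plus the
  squared-distance terms of the claim. The remaining Lipschitz cross term is absorbed by
  Young's inequality with weight \<open>\<gamma>\<close>.\<close>

lemma cyc3_monotoneD: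
  assumes "cyc3_monotone T" "u1 \<in> T x1" "u2 \<in> T x2" "u3 \<in> T x3"
  shows "inner u1 (x1 - x2) + inner u2 (x2 - x3) + inner u3 (x3 - x1) \<ge> 0"
  using assms unfolding cyc3_monotone_def cyc3_mono_graph_def gra_def by blast

lemma max_cyc3_monotone_imp_cyc3_monotone: "max_cyc3_monotone T \<Longrightarrow> cyc3_monotone T"
  unfolding max_cyc3_monotone_def by blast

lemma mem_resolvent_iff:
  assumes "\<eta> \<noteq> 0"
  shows "x \<in> resolvent \<eta> T v \<longleftrightarrow> (1 / \<eta>) *\<^sub>R (v - x) \<in> T x"
proof -
  have "v = x + \<eta> *\<^sub>R u \<longleftrightarrow> u = (1 / \<eta>) *\<^sub>R (v - x)" for u
  proof
    assume "v = x + \<eta> *\<^sub>R u"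
    then show "u = (1 / \<eta>) *\<^sub>R (v - x)"
      using assms by simp
  next
    assume "u = (1 / \<eta>) *\<^sub>R (v - x)"
    then show "v = x + \<eta> *\<^sub>R u"
      using assms by simp
  qed
  then show ?thesis
    unfolding resolvent_def by auto
qed

lemma mem_zer_sum_iff: "x \<in> zer_sum F T \<longleftrightarrow> - F x \<in> T x"
  unfolding zer_sum_def by (auto simp: add_eq_0_iff)

lemma forward_backward_cyc3_estimate:
  fixes F :: "'a::real_inner \<Rightarrow> 'a"
  assumes "cyc3_monotone T" "\<eta> > 0"
    and a: "a \<in> resolvent \<eta> T (y - \<eta> *\<^sub>R F b)"
    and b: "b \<in> resolvent \<eta> T (z - \<eta> *\<^sub>R F c)"
    and s: "s \<in> zer_sum F T"
  shows "\<eta> * inner (F b - F s) (b - s) + \<eta> * inner (F b - F c) (a - b)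
    \<le> inner (y - a) (a - s) + inner (z - b) (b - a)"
proof -
  let ?u = "(1 / \<eta>) *\<^sub>R (y - \<eta> *\<^sub>R F b - a)" and ?v = "(1 / \<eta>) *\<^sub>R (z - \<eta> *\<^sub>R F c - b)"
  have "?u \<in> T a" "- F s \<in> T s" "?v \<in> T b"
    using a b s \<open>\<eta> > 0\<close> by (simp_all add: mem_resolvent_iff mem_zer_sum_iff)
  then have "0 \<le> inner ?u (a - s) + inner (- F s) (s - b) + inner ?v (b - a)"
    by (rule cyc3_monotoneD[OF \<open>cyc3_monotone T\<close>])
  then have "0 \<le> \<eta> * (inner ?u (a - s) + inner (- F s) (s - b) + inner ?v (b - a))"
    using \<open>\<eta> > 0\<close> by simp
  also have "\<dots> = inner (y - a) (a - s) + inner (z - b) (b - a)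
      - \<eta> * inner (F b - F s) (b - s) - \<eta> * inner (F b - F c) (a - b)"
    using \<open>\<eta> > 0\<close> by (simp add: inner_simps algebra_simps)
  finally show ?thesis
    by simp
qed

lemma weighted_young:
  fixes \<gamma> p q :: real
  assumes "\<gamma> > 0"
  shows "2 * p * q \<le> \<gamma> * q\<^sup>2 + p\<^sup>2 / \<gamma>"
proof -
  have "0 \<le> (\<gamma> * q - p)\<^sup>2 / \<gamma>"
    using assms by simp
  also have "\<dots> = \<gamma> * q\<^sup>2 + p\<^sup>2 / \<gamma> - 2 * p * q"
    using assms by (simp add: power2_eq_square field_simps)
  finally show ?thesis
    by simp
qed

lemma lipschitz_inner_young:
  fixes F :: "'a::real_inner \<Rightarrow> 'a"
  assumes "L-lipschitz_on S F" "b \<in> S" "c \<in> S" "\<gamma> > 0"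
  shows "- \<gamma> * (norm d)\<^sup>2 - L\<^sup>2 * \<eta>\<^sup>2 / \<gamma> * (norm (b - c))\<^sup>2 \<le> 2 * \<eta> * inner (F b - F c) d"
proof -
  have "\<bar>inner (F b - F c) d\<bar> \<le> norm (F b - F c) * norm d"
    by (rule Cauchy_Schwarz_ineq2)
  also have "\<dots> \<le> L * norm (b - c) * norm d"
    using lipschitz_onD[OF assms(1-3)] by (simp add: dist_norm mult_right_mono)
  finally have inner_bound: "\<bar>inner (F b - F c) d\<bar> \<le> L * norm (b - c) * norm d" .
  have "- (2 * \<eta> * inner (F b - F c) d) \<le> 2 * \<bar>\<eta>\<bar> * \<bar>inner (F b - F c) d\<bar>"
    using abs_ge_minus_self[of "2 * \<eta> * inner (F b - F c) d"] by (simp add: abs_mult)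
  also have "\<dots> \<le> 2 * (\<bar>\<eta>\<bar> * L * norm (b - c)) * norm d"
    using mult_left_mono[OF inner_bound, of "2 * \<bar>\<eta>\<bar>"] by (simp add: ac_simps)
  also have "\<dots> \<le> \<gamma> * (norm d)\<^sup>2 + (\<bar>\<eta>\<bar> * L * norm (b - c))\<^sup>2 / \<gamma>"
    using weighted_young[OF \<open>\<gamma> > 0\<close>] .
  also have "(\<bar>\<eta>\<bar> * L * norm (b - c))\<^sup>2 / \<gamma> = L\<^sup>2 * \<eta>\<^sup>2 / \<gamma> * (norm (b - c))\<^sup>2"
    by (simp add: power_mult_distrib)
  finally show ?thesis
    by simp
qed

lemma golden_ratio_identity:
  fixes a b y z y' s :: "'a::real_inner"
  assumes "\<tau> \<noteq> 0"
    and y': "y' = ((\<tau> - 1) / \<tau>) *\<^sub>R a + (1 / \<tau>) *\<^sub>R y"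
    and y: "y = ((\<tau> - 1) / \<tau>) *\<^sub>R b + (1 / \<tau>) *\<^sub>R z"
  shows "\<tau> * (norm (y' - s))\<^sup>2 = \<tau> * (norm (y - s))\<^sup>2 - \<tau> * (\<tau> - 1) * (norm (a - b))\<^sup>2
    - (\<tau> - 1) * (1 - \<tau>\<^sup>2 + \<tau>) / \<tau> * (norm (a - y))\<^sup>2 - \<tau> * (\<tau> - 1) * (norm (b - y))\<^sup>2
    - 2 * (\<tau> - 1) * (inner (y - a) (a - s) + inner (z - b) (b - a))"
proof -
  define p q r where "p = a - s" and "q = b - s" and "r = y - s"
  have "\<tau> *\<^sub>R y = (\<tau> - 1) *\<^sub>R b + z"
    using \<open>\<tau> \<noteq> 0\<close> unfolding y by (simp add: scaleR_add_right)
  then have z: "z - b = \<tau> *\<^sub>R (r - q)"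
    unfolding q_def r_def by (simp add: algebra_simps)
  have y's: "y' - s = ((\<tau> - 1) / \<tau>) *\<^sub>R p + (1 / \<tau>) *\<^sub>R r"
    using \<open>\<tau> \<noteq> 0\<close> unfolding y' p_def r_def
    by (simp add: algebra_simps diff_divide_distrib flip: scaleR_add_left)
  have pqr: "a - b = p - q" "y - s = r" "a - y = p - r" "b - y = q - r" "y - a = r - p"
    "a - s = p" "b - a = q - p"
    unfolding p_def q_def r_def by (auto simp: algebra_simps)
  show ?thesis
    unfolding z y's pqr using \<open>\<tau> \<noteq> 0\<close>
    by (simp add: power2_norm_eq_inner inner_simps inner_commute field_simps)
      (simp add: algebra_simps power2_eq_square)
qed

theorem lemma9:
  fixes F :: "real^'p \<Rightarrow> real^'p" and T :: "real^'p \<Rightarrow> (real^'p) set"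
    and L \<tau> \<eta> \<gamma> :: real and x y :: "nat \<Rightarrow> real^'p" and xs :: "real^'p" and k :: nat
  assumes Lip: "L-lipschitz_on UNIV F"
    and maxT: "max_cyc3_monotone T"
    and zer_ne: "zer_sum F T \<noteq> {}"
    and tau: "\<tau> > 1" and eta: "\<eta> > 0"
    and x0: "x 0 \<in> dom_op T"
    and y0: "y 0 = ((\<tau> - 1) / \<tau>) *\<^sub>R x 0 + (1 / \<tau>) *\<^sub>R x 0"
    and ystep: "\<And>n. y (Suc n) = ((\<tau> - 1) / \<tau>) *\<^sub>R x (Suc n) + (1 / \<tau>) *\<^sub>R y n"
    and xstep: "\<And>n. x (Suc n) \<in> resolvent \<eta> T (y n - \<eta> *\<^sub>R F (x n))"
    and xs: "xs \<in> zer_sum F T"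
    and gam: "\<gamma> > 0"
    and k: "k \<ge> 1"
  shows "\<tau> * (norm (y (k+1) - xs))\<^sup>2 + (\<tau> - 1) * (\<tau> - \<gamma>) * (norm (x (k+1) - x k))\<^sup>2
    \<le> \<tau> * (norm (y k - xs))\<^sup>2 + (\<tau> - 1) * L\<^sup>2 * \<eta>\<^sup>2 / \<gamma> * (norm (x k - x (k-1)))\<^sup>2
       - (\<tau> - 1) * (1 - \<tau>\<^sup>2 + \<tau>) / \<tau> * (norm (x (k+1) - y k))\<^sup>2
       - \<tau> * (\<tau> - 1) * (norm (x k - y k))\<^sup>2
       - 2 * \<eta> * (\<tau> - 1) * inner (F (x k) - F xs) (x k - xs)"
proof -
  obtain m where m: "k = Suc m"
    using k by (cases k) auto
  have x_k: "x k \<in> resolvent \<eta> T (y (k - 1) - \<eta> *\<^sub>R F (x (k - 1)))"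
    using xstep[of m] m by simp
  have y_k: "y k = ((\<tau> - 1) / \<tau>) *\<^sub>R x k + (1 / \<tau>) *\<^sub>R y (k - 1)"
    using ystep[of m] m by simp
  have identity: "\<tau> * (norm (y (k+1) - xs))\<^sup>2 = \<tau> * (norm (y k - xs))\<^sup>2
      - \<tau> * (\<tau> - 1) * (norm (x (k+1) - x k))\<^sup>2
      - (\<tau> - 1) * (1 - \<tau>\<^sup>2 + \<tau>) / \<tau> * (norm (x (k+1) - y k))\<^sup>2
      - \<tau> * (\<tau> - 1) * (norm (x k - y k))\<^sup>2
      - 2 * (\<tau> - 1) * (inner (y k - x (k+1)) (x (k+1) - xs) + inner (y (k-1) - x k) (x k - x (k+1)))"
    using tau ystep[of k] y_k by (intro golden_ratio_identity) simp_all
  have "2 * \<eta> * inner (F (x k) - F xs) (x k - xs) - \<gamma> * (norm (x (k+1) - x k))\<^sup>2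
      - L\<^sup>2 * \<eta>\<^sup>2 / \<gamma> * (norm (x k - x (k-1)))\<^sup>2
      \<le> 2 * (inner (y k - x (k+1)) (x (k+1) - xs) + inner (y (k-1) - x k) (x k - x (k+1)))"
    using forward_backward_cyc3_estimate[OF max_cyc3_monotone_imp_cyc3_monotone[OF maxT] eta
        xstep[of k] x_k xs]
      lipschitz_inner_young[OF Lip UNIV_I[of "x k"] UNIV_I[of "x (k-1)"] gam, of "x (k+1) - x k" \<eta>]
    by simp
  from mult_left_mono[OF this, of "\<tau> - 1"] show ?thesis
    using tau identity by (simp add: algebra_simps)
qed

end
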